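(* Let $(A,\mathfrak{g},\omega)$ be an $n$-plectic structure, $f\in\mathcal{P}ois(A,\mathfrak{g},\omega)$ a homogeneous Poisson cotensor with associated Poisson constraint $y$ (i.e. $i_y\omega=f$) and associated Hamilton tensor $x$ (i.e. $i_x\omega=df$). If both $x$ and $y$ are homogeneous, then $|x|=|f|+n$ and $|y|=|x|+1$ with respect to the tensor grading. Moreover $d\,i_y\omega=i_x\omega$.
   Context: A Lie Rinehart pair $(A,\mathfrak{g})$: $A$ a commutative associative unital $\mathbb{R}$-algebra, $\mathfrak{g}$ a real Lie algebra that is an $A$-module, with a Lie algebra morphism $D:\mathfrak{g}\to\mathrm{Der}(A)$ such that $[x,ay]=D_x(a)y+a[x,y]$; torsionless means $\mathfrak{g}\to\mathfrak{g}^{\vee\vee}$ ($\mathfrak{g}^\vee=\mathrm{Hom}_A(\mathfrak{g},A)$) is injective. Tensors $X(\mathfrak{g},A)=\bigoplus_k\Lambda^k_A\mathfrak{g}$, cotensors $\Omega(\mathfrak{g},A)=\bigoplus_k\Lambda^k_A\mathfrak{g}^\vee$. Tensor grading: $|x|=k$ for $x\in\Lambda^k_A\mathfrak{g}$ and $|f|=-k$ for $f\in\Lambda^k_A\mathfrak{g}^\vee$ (tensors in positive, cotensors in negative degrees). The right contraction $i_x$ is defined by $\langle i_xf,z\rangle=\langle f,x\wedge z\rangle$ for all tensors $z$, where $\langle\cdot,\cdot\rangle$ is the natural determinant pairing between $\Lambda^k_A\mathfrak{g}^\vee$ and $\Lambda^k_A\mathfrak{g}$; $d$ is the de Rham (Chevalley–Eilenberg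 type) differential on $\Omega(\mathfrak{g},A)$, $df(x_0\wedge\cdots\wedge x_k)=\sum_j(-1)^jD_{x_j}(f(\cdots\widehat{x_j}\cdots))+\sum_{i<j}(-1)^{i+j}f([x_i,x_j]\wedge\cdots\widehat{x_i}\cdots\widehat{x_j}\cdots)$. An $n$-plectic structure is a torsionless Lie Rinehart pair with a cocycle $\omega\in\Lambda^{n+1}_A\mathfrak{g}^\vee$. A Poisson cotensor is a cotensor $f$ for which there exist tensors $x$ with $i_x\omega=df$ (Hamilton tensor) and $y$ with $i_y\omega=f$ (Poisson constraint); $\mathcal{P}ois(A,\mathfrak{g},\omega)$ is the set of Poisson cotensors. *)

theory Defs
  imports Complex_Main "HOL-Combinatorics.Permutations"
begin

text \<open>
The algebra A is a type 'a of class comm_ring_1 and real_algebra_1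
(a commutative associative unital real algebra).  The Lie algebra g is a type 'g of
class ab_group_add carrying an A-module action sm, a bracket br and an anchor D.
Real scalars act on g through sm (of_real r).
\<close>

definition is_A_module :: "('a::comm_ring_1 \<Rightarrow> 'g::ab_group_add \<Rightarrow> 'g) \<Rightarrow> bool" where
  "is_A_module sm \<longleftrightarrow>
     (\<forall>a x y. sm a (x + y) = sm a x + sm a y) \<and>
     (\<forall>a b x. sm (a + b) x = sm a x + sm b x) \<and>
     (\<forall>a b x. sm (a * b) x = sm a (sm b x)) \<and>
     (\<forall>x. sm 1 x = x)"

definition is_real_lie_algebra ::
  "('a::{comm_ring_1,real_algebra_1} \<Rightarrow> 'g::ab_group_add \<Rightarrow> 'g) \<Rightarrow> ('g \<Rightarrow> 'g \<Rightarrow> 'g) \<Rightarrow> bool" where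
  "is_real_lie_algebra sm br \<longleftrightarrow>
     (\<forall>x y z. br (x + y) z = br x z + br y z) \<and>
     (\<forall>x y z. br x (y + z) = br x y + br x z) \<and>
     (\<forall>(r::real) x y. br (sm (of_real r) x) y = sm (of_real r) (br x y)) \<and>
     (\<forall>(r::real) x y. br x (sm (of_real r) y) = sm (of_real r) (br x y)) \<and>
     (\<forall>x. br x x = 0) \<and>
     (\<forall>x y z. br x (br y z) + br y (br z x) + br z (br x y) = 0)"

definition is_derivation :: "('a::{comm_ring_1,real_algebra_1} \<Rightarrow> 'a) \<Rightarrow> bool" where
  "is_derivation \<delta> \<longleftrightarrow>
     (\<forall>a b. \<delta> (a + b) = \<delta> a + \<delta> b) \<and>
     (\<forall>(r::real) a. \<delta> (of_real r * a) = of_real r * \<delta> a) \<and>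
     (\<forall>a b. \<delta> (a * b) = a * \<delta> b + \<delta> a * b)"

definition is_lie_rinehart ::
  "('a::{comm_ring_1,real_algebra_1} \<Rightarrow> 'g::ab_group_add \<Rightarrow> 'g) \<Rightarrow> ('g \<Rightarrow> 'g \<Rightarrow> 'g)
     \<Rightarrow> ('g \<Rightarrow> 'a \<Rightarrow> 'a) \<Rightarrow> bool" where
  "is_lie_rinehart sm br D \<longleftrightarrow>
     is_A_module sm \<and> is_real_lie_algebra sm br \<and>
     (\<forall>x. is_derivation (D x)) \<and>
     \<comment> \<open>D is a morphism of real Lie algebras g \<rightarrow> Der(A)\<close>
     (\<forall>x y a. D (x + y) a = D x a + D y a) \<and>
     (\<forall>(r::real) x a. D (sm (of_real r) x) a = of_real r * D x a) \<and>
     (\<forall>x y a. D (br x y) a = D x (D y a) - D y (D x a)) \<and>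
     \<comment> \<open>Leibniz rule\<close>
     (\<forall>x a y. br x (sm a y) = sm (D x a) y + sm a (br x y))"

definition dual :: "('a::comm_ring_1 \<Rightarrow> 'g::ab_group_add \<Rightarrow> 'g) \<Rightarrow> ('g \<Rightarrow> 'a) set" where
  "dual sm = {\<phi>. (\<forall>x y. \<phi> (x + y) = \<phi> x + \<phi> y) \<and> (\<forall>a x. \<phi> (sm a x) = a * \<phi> x)}"

text \<open>Torsionless: the canonical map g \<rightarrow> g^\<or>\<or> is injective.\<close>
definition torsionless :: "('a::comm_ring_1 \<Rightarrow> 'g::ab_group_add \<Rightarrow> 'g) \<Rightarrow> bool" where
  "torsionless sm \<longleftrightarrow> (\<forall>x. (\<forall>\<phi>\<in>dual sm. \<phi> x = 0) \<longrightarrow> x = 0)"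

text \<open>A tensor is represented by a formal A-linear combination of words x1\<dots>xk
(a finitely supported function on 'g list); the word [x1,\<dots>,xk] stands for
x1 \<and> \<dots> \<and> xk.  Two representatives define the same tensor iff their difference
lies in the A-span of the multilinearity and alternation relations.\<close>

definition formal :: "('g list \<Rightarrow> 'a::zero) \<Rightarrow> bool" where
  "formal c \<longleftrightarrow> finite {l. c l \<noteq> 0}"

definition word :: "'g list \<Rightarrow> 'g list \<Rightarrow> 'a::{zero,one}" where
  "word w = (\<lambda>l. if l = w then 1 else 0)"

inductive_set ext_rel :: "('a::comm_ring_1 \<Rightarrow> 'g::ab_group_add \<Rightarrow> 'g) \<Rightarrow> ('g list \<Rightarrow> 'a) set"
  for sm where
  rel_zero: "(\<lambda>_. 0) \<in> ext_rel sm"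
| rel_add1: "(\<lambda>l. word (u @ [x + y] @ v) l - word (u @ [x] @ v) l - word (u @ [y] @ v) l) \<in> ext_rel sm"
| rel_smult1: "(\<lambda>l. word (u @ [sm a x] @ v) l - a * word (u @ [x] @ v) l) \<in> ext_rel sm"
| rel_alt: "word (u @ [x, x] @ v) \<in> ext_rel sm"
| rel_plus: "c \<in> ext_rel sm \<Longrightarrow> c' \<in> ext_rel sm \<Longrightarrow> (\<lambda>l. c l + c' l) \<in> ext_rel sm"
| rel_scale: "c \<in> ext_rel sm \<Longrightarrow> (\<lambda>l. a * c l) \<in> ext_rel sm"

definition tensor_homogeneous ::
  "('a::comm_ring_1 \<Rightarrow> 'g::ab_group_add \<Rightarrow> 'g) \<Rightarrow> int \<Rightarrow> ('g list \<Rightarrow> 'a) \<Rightarrow> bool" where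
  "tensor_homogeneous sm p c \<longleftrightarrow>
     (\<exists>c'. formal c' \<and> (\<lambda>l. c l - c' l) \<in> ext_rel sm \<and> (\<forall>l. c' l \<noteq> 0 \<longrightarrow> int (length l) = p))"

text \<open>A cotensor is identified, via the determinant pairing, with the A-valued
function on words it induces: \<phi>1 \<and> \<dots> \<and> \<phi>k pairs with x1 \<and> \<dots> \<and> xk to det(\<phi>i(xj)),
and pairs to 0 with words of other length.\<close>

definition det_pair :: "('g \<Rightarrow> 'a::comm_ring_1) list \<Rightarrow> 'g list \<Rightarrow> 'a" where
  "det_pair \<phi>s l =
     (if length l = length \<phi>s then
        (\<Sum>\<pi> | \<pi> permutes {..<length \<phi>s}. of_int (sign \<pi>) * (\<Prod>i<length \<phi>s. (\<phi>s ! i) (l ! \<pi> i)))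
      else 0)"

inductive_set cotensors :: "('a::comm_ring_1 \<Rightarrow> 'g::ab_group_add \<Rightarrow> 'g) \<Rightarrow> ('g list \<Rightarrow> 'a) set"
  for sm where
  cot_zero: "(\<lambda>_. 0) \<in> cotensors sm"
| cot_wedge: "set \<phi>s \<subseteq> dual sm \<Longrightarrow> (\<lambda>l. a * det_pair \<phi>s l) \<in> cotensors sm"
| cot_plus: "f \<in> cotensors sm \<Longrightarrow> f' \<in> cotensors sm \<Longrightarrow> (\<lambda>l. f l + f' l) \<in> cotensors sm"

text \<open>A cotensor is homogeneous of tensor degree q (q = -k for an element of \<Lambda>^k g^\<or>).\<close>
definition cotensor_homogeneous :: "int \<Rightarrow> ('g list \<Rightarrow> 'a::zero) \<Rightarrow> bool" where
  "cotensor_homogeneous q f \<longleftrightarrow> (\<forall>l. f l \<noteq> 0 \<longrightarrow> int (length l) = - q)"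

text \<open>Right contraction: (i_x f)(z) = f(x \<and> z).\<close>
definition contr :: "('g list \<Rightarrow> 'a::comm_ring_1) \<Rightarrow> ('g list \<Rightarrow> 'a) \<Rightarrow> ('g list \<Rightarrow> 'a)" where
  "contr x f = (\<lambda>l. \<Sum>m\<in>{m. x m \<noteq> 0}. x m * f (m @ l))"

definition del_nth :: "nat \<Rightarrow> 'g list \<Rightarrow> 'g list" where
  "del_nth j l = take j l @ drop (Suc j) l"

definition dR :: "('g \<Rightarrow> 'g \<Rightarrow> 'g) \<Rightarrow> ('g \<Rightarrow> 'a::comm_ring_1 \<Rightarrow> 'a) \<Rightarrow> ('g list \<Rightarrow> 'a) \<Rightarrow> ('g list \<Rightarrow> 'a)" where
  "dR br D f = (\<lambda>l.
     (\<Sum>j<length l. (-1) ^ j * D (l ! j) (f (del_nth j l))) +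
     (\<Sum>j<length l. \<Sum>i<j. (-1) ^ (i + j) * f (br (l ! i) (l ! j) # del_nth i (del_nth j l))))"

definition n_plectic ::
  "nat \<Rightarrow> ('a::{comm_ring_1,real_algebra_1} \<Rightarrow> 'g::ab_group_add \<Rightarrow> 'g) \<Rightarrow> ('g \<Rightarrow> 'g \<Rightarrow> 'g)
     \<Rightarrow> ('g \<Rightarrow> 'a \<Rightarrow> 'a) \<Rightarrow> ('g list \<Rightarrow> 'a) \<Rightarrow> bool" where
  "n_plectic n sm br D \<omega> \<longleftrightarrow>
     is_lie_rinehart sm br D \<and> torsionless sm \<and>
     \<omega> \<in> cotensors sm \<and> cotensor_homogeneous (- int (n + 1)) \<omega> \<and> dR br D \<omega> = (\<lambda>_. 0)"

definition is_tensor :: "('g list \<Rightarrow> 'a::zero) \<Rightarrow> bool" where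
  "is_tensor x \<longleftrightarrow> formal x"

definition hamilton_tensor where
  "hamilton_tensor br D \<omega> f x \<longleftrightarrow> is_tensor x \<and> contr x \<omega> = dR br D f"

definition poisson_constraint where
  "poisson_constraint \<omega> f y \<longleftrightarrow> is_tensor y \<and> contr y \<omega> = f"

definition Pois where
  "Pois sm br D \<omega> = {f \<in> cotensors sm. (\<exists>x. hamilton_tensor br D \<omega> f x) \<and> (\<exists>y. poisson_constraint \<omega> f y)}"

end

theory Submission
  imports Defs "Jordan_Normal_Form.Determinant"
begin

text \<open>
A cotensor pairs with words through determinants, so it is multilinear and alternating in
the letters of the word. The relations defining the exterior algebra are therefore killed by
contraction, and contracting a cotensor of degree q with a tensor of degree p yields a
cotensor of degree q + p, whatever representative of the tensor is used. The differential
lowers the degree by one. Since d f is nonzero (hence so is f), comparing degrees in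
i_x \<omega> = d f and i_y \<omega> = f gives |f| - 1 = -(n + 1) + |x| and |f| = -(n + 1) + |y|.
\<close>

definition pairing_row :: "('g \<Rightarrow> 'a) list \<Rightarrow> 'g \<Rightarrow> 'a vec" where
  "pairing_row \<phi>s z = vec (length \<phi>s) (\<lambda>j. (\<phi>s ! j) z)"

text \<open>The letters of the word index the rows, so that a slot of the word is a row of the matrix;
  det_pair is then the Leibniz expansion of the determinant along columns.\<close>

definition pairing_mat :: "('g \<Rightarrow> 'a) list \<Rightarrow> 'g list \<Rightarrow> 'a mat" where
  "pairing_mat \<phi>s l = mat\<^sub>r (length l) (length \<phi>s) (\<lambda>i. pairing_row \<phi>s (l ! i))"

lemma pairing_row_carrier [simp]: "pairing_row \<phi>s z \<in> carrier_vec (length \<phi>s)"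
  by (simp add: pairing_row_def)

lemma pairing_mat_index:
  "i < length l \<Longrightarrow> j < length \<phi>s \<Longrightarrow> pairing_mat \<phi>s l $$ (i, j) = (\<phi>s ! j) (l ! i)"
  by (simp add: pairing_mat_def pairing_row_def)

lemma det_pair_eq_det:
  "det_pair \<phi>s l = (if length l = length \<phi>s then det (pairing_mat \<phi>s l) else 0)"
proof (cases "length l = length \<phi>s")
  case True
  let ?n = "length \<phi>s"
  have "det (pairing_mat \<phi>s l) =
      (\<Sum>p | p permutes {..<?n}. of_int (sign p) * (\<Prod>j<?n. pairing_mat \<phi>s l $$ (p j, j)))"
    using det_col[of "pairing_mat \<phi>s l" ?n] True by (simp add: pairing_mat_def atLeast0LessThan)
  also have "\<dots> = det_pair \<phi>s l"
    unfolding det_pair_def using True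
  proof (simp, intro sum.cong refl arg_cong2[where f = "(*)"] prod.cong)
    fix p j assume "p \<in> {p. p permutes {..<?n}}" "j \<in> {..<?n}"
    then have "p j < ?n" using permutes_in_image[of p "{..<?n}" j] by simp
    then show "pairing_mat \<phi>s l $$ (p j, j) = (\<phi>s ! j) (l ! p j)"
      using True \<open>j \<in> {..<?n}\<close> by (simp add: pairing_mat_index)
  qed
  finally show ?thesis using True by simp
qed (simp add: det_pair_def)

lemma pairing_mat_slot:
  assumes "length (u @ [z] @ v) = length \<phi>s"
  shows "pairing_mat \<phi>s (u @ [z] @ v) = mat\<^sub>r (length \<phi>s) (length \<phi>s)
    (\<lambda>i. if i = length u then pairing_row \<phi>s z else pairing_row \<phi>s ((u @ [w] @ v) ! i))"
  using assms unfolding pairing_mat_def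
  by (intro eq_matI) (auto simp: nth_append nth_Cons' pairing_row_def)

lemma det_pair_slot_add:
  assumes "set \<phi>s \<subseteq> dual sm"
  shows "det_pair \<phi>s (u @ [x + y] @ v) = det_pair \<phi>s (u @ [x] @ v) + det_pair \<phi>s (u @ [y] @ v)"
proof (cases "length (u @ [x] @ v) = length \<phi>s")
  case True
  have row_add: "pairing_row \<phi>s (x + y) = pairing_row \<phi>s x + pairing_row \<phi>s y"
    using assms nth_mem by (intro eq_vecI) (fastforce simp: pairing_row_def dual_def)+
  show ?thesis
    using True det_row_add[of "\<lambda>_. pairing_row \<phi>s x" "length u" "length \<phi>s" "\<lambda>_. pairing_row \<phi>s y"
        "\<lambda>i. pairing_row \<phi>s ((u @ [x] @ v) ! i)"]
    by (simp add: det_pair_eq_det pairing_mat_slot[where w = x, of u "x + y" v]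
        pairing_mat_slot[where w = x, of u x v] pairing_mat_slot[where w = x, of u y v]
        row_add cong: if_cong del: append.simps append_Cons)
qed (simp add: det_pair_def)

lemma det_pair_slot_scale:
  assumes "set \<phi>s \<subseteq> dual sm"
  shows "det_pair \<phi>s (u @ [sm a x] @ v) = a * det_pair \<phi>s (u @ [x] @ v)"
proof (cases "length (u @ [x] @ v) = length \<phi>s")
  case True
  have "pairing_mat \<phi>s (u @ [sm a x] @ v) = multrow (length u) a (pairing_mat \<phi>s (u @ [x] @ v))"
    using assms True nth_mem
    by (intro eq_matI) (fastforce simp: pairing_mat_def pairing_row_def dual_def nth_append)+
  then show ?thesis
    using True det_multrow[of "length u" "length \<phi>s" "pairing_mat \<phi>s (u @ [x] @ v)" a]
    by (simp add: det_pair_eq_det pairing_mat_def)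
qed (simp add: det_pair_def)

lemma det_pair_repeated_slot: "det_pair \<phi>s (u @ [x, x] @ v) = 0"
proof (cases "length (u @ [x, x] @ v) = length \<phi>s")
  case True
  let ?l = "u @ [x, x] @ v"
  have "row (pairing_mat \<phi>s ?l) (length u) = row (pairing_mat \<phi>s ?l) (Suc (length u))"
    by (simp add: pairing_mat_def pairing_row_def nth_append)
  then show ?thesis
    using True det_identical_rows[of "pairing_mat \<phi>s ?l" "length \<phi>s" "length u" "Suc (length u)"]
    by (simp add: det_pair_eq_det pairing_mat_def)
qed (simp add: det_pair_def)

definition alternating_multilinear ::
  "('a::comm_ring_1 \<Rightarrow> 'g::ab_group_add \<Rightarrow> 'g) \<Rightarrow> ('g list \<Rightarrow> 'a) \<Rightarrow> bool" where
  "alternating_multilinear sm \<omega> \<longleftrightarrow>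
     (\<forall>u x y v. \<omega> (u @ [x + y] @ v) = \<omega> (u @ [x] @ v) + \<omega> (u @ [y] @ v)) \<and>
     (\<forall>u a x v. \<omega> (u @ [sm a x] @ v) = a * \<omega> (u @ [x] @ v)) \<and>
     (\<forall>u x v. \<omega> (u @ [x, x] @ v) = 0)"

lemma cotensors_alternating_multilinear:
  "\<omega> \<in> cotensors sm \<Longrightarrow> alternating_multilinear sm \<omega>"
proof (induction rule: cotensors.induct)
  case (cot_wedge \<phi>s a)
  then show ?case
    by (simp add: alternating_multilinear_def det_pair_slot_add det_pair_slot_scale
        det_pair_repeated_slot algebra_simps del: append.simps append_Cons)
qed (simp_all add: alternating_multilinear_def algebra_simps)

lemma formal_word: "formal (word w :: 'g list \<Rightarrow> 'a::zero_neq_one)"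
  by (simp add: formal_def word_def)

lemma formal_add: "formal c \<Longrightarrow> formal c' \<Longrightarrow> formal (\<lambda>l. c l + c' l :: 'a::comm_monoid_add)"
  unfolding formal_def by (rule finite_subset[of _ "{l. c l \<noteq> 0} \<union> {l. c' l \<noteq> 0}"]) auto

lemma formal_diff: "formal c \<Longrightarrow> formal c' \<Longrightarrow> formal (\<lambda>l. c l - c' l :: 'a::ab_group_add)"
  unfolding formal_def by (rule finite_subset[of _ "{l. c l \<noteq> 0} \<union> {l. c' l \<noteq> 0}"]) auto

lemma formal_scale: "formal c \<Longrightarrow> formal (\<lambda>l. a * c l :: 'a::mult_zero)"
  unfolding formal_def by (rule finite_subset[of _ "{l. c l \<noteq> 0}"]) auto

lemma ext_rel_formal: "r \<in> ext_rel sm \<Longrightarrow> formal r"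
  by (induction rule: ext_rel.induct)
    (simp_all add: formal_def[of "\<lambda>_. 0"] formal_word formal_add formal_diff formal_scale)

lemma contr_eq_sum:
  assumes "finite S" and "{m. x m \<noteq> 0} \<subseteq> S"
  shows "contr x \<omega> l = (\<Sum>m\<in>S. x m * \<omega> (m @ l))"
  unfolding contr_def by (rule sum.mono_neutral_left) (use assms in auto)

lemma contr_word: "contr (word w) \<omega> l = \<omega> (w @ l)"
  by (subst contr_eq_sum[of "{w}"]) (auto simp: word_def)

lemma contr_add:
  assumes "formal c" and "formal c'"
  shows "contr (\<lambda>m. c m + c' m) \<omega> l = contr c \<omega> l + contr c' \<omega> l"
proof -
  let ?S = "{m. c m \<noteq> 0} \<union> {m. c' m \<noteq> 0}"
  have "finite ?S" using assms by (simp add: formal_def)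
  then show ?thesis
    by (subst (1 2 3) contr_eq_sum[of ?S]) (auto simp: distrib_right sum.distrib)
qed

lemma contr_diff:
  assumes "formal c" and "formal c'"
  shows "contr (\<lambda>m. c m - c' m) \<omega> l = contr c \<omega> l - contr c' \<omega> l"
proof -
  let ?S = "{m. c m \<noteq> 0} \<union> {m. c' m \<noteq> 0}"
  have "finite ?S" using assms by (simp add: formal_def)
  then show ?thesis
    by (subst (1 2 3) contr_eq_sum[of ?S]) (auto simp: left_diff_distrib sum_subtractf)
qed

lemma contr_scale:
  assumes "formal c"
  shows "contr (\<lambda>m. a * c m) \<omega> l = a * contr c \<omega> l"
proof -
  let ?S = "{m. c m \<noteq> 0}"
  have "finite ?S" using assms by (simp add: formal_def)
  then show ?thesis
    by (subst (1 2) contr_eq_sum[of ?S]) (auto simp: sum_distrib_left mult.assoc)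
qed

lemma contr_ext_rel:
  assumes "alternating_multilinear sm \<omega>" and "r \<in> ext_rel sm"
  shows "contr r \<omega> l = 0"
  using assms(2)
proof (induction rule: ext_rel.induct)
  case rel_zero
  then show ?case by (simp add: contr_def)
next
  case (rel_add1 u x y v)
  then show ?case using assms(1)
    by (simp add: contr_diff formal_diff formal_word contr_word alternating_multilinear_def)
next
  case (rel_smult1 u a x v)
  then show ?case using assms(1)
    by (simp add: contr_diff contr_scale formal_scale formal_word contr_word alternating_multilinear_def)
next
  case (rel_alt u x v)
  then show ?case using assms(1) by (simp add: contr_word alternating_multilinear_def)
next
  case (rel_plus c c')
  then show ?case by (simp add: contr_add ext_rel_formal)
next
  case (rel_scale c a)
  then show ?case by (simp add: contr_scale ext_rel_formal)
qed

lemma tensor_homogeneous_formal: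
  assumes "tensor_homogeneous sm p x"
  shows "formal x"
proof -
  obtain c where c: "formal c" and rel: "(\<lambda>l. x l - c l) \<in> ext_rel sm"
    using assms unfolding tensor_homogeneous_def by blast
  have "formal (\<lambda>l. (x l - c l) + c l)"
    using formal_add[OF ext_rel_formal[OF rel] c] .
  then show ?thesis by simp
qed

lemma cotensor_homogeneous_contr:
  assumes "alternating_multilinear sm \<omega>" and "cotensor_homogeneous q \<omega>"
    and "tensor_homogeneous sm p x"
  shows "cotensor_homogeneous (q + p) (contr x \<omega>)"
  unfolding cotensor_homogeneous_def
proof (intro allI impI)
  fix l assume nonzero: "contr x \<omega> l \<noteq> 0"
  obtain c where c: "formal c" "(\<lambda>l. x l - c l) \<in> ext_rel sm"
    and deg: "\<And>m. c m \<noteq> 0 \<Longrightarrow> int (length m) = p"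
    using assms(3) unfolding tensor_homogeneous_def by blast
  have "contr x \<omega> l - contr c \<omega> l = contr (\<lambda>m. x m - c m) \<omega> l"
    using contr_diff[OF tensor_homogeneous_formal[OF assms(3)] c(1)] by simp
  also have "\<dots> = 0"
    by (rule contr_ext_rel[OF assms(1) c(2)])
  finally have "contr c \<omega> l \<noteq> 0"
    using nonzero by simp
  then obtain m where "c m * \<omega> (m @ l) \<noteq> 0"
    unfolding contr_def by (meson sum.not_neutral_contains_not_neutral)
  then have "c m \<noteq> 0" and "\<omega> (m @ l) \<noteq> 0"
    by auto
  then have "int (length m) = p" and "int (length (m @ l)) = - q"
    using deg assms(2) unfolding cotensor_homogeneous_def by blast+
  then show "int (length l) = - (q + p)"
    by simp
qed

lemma derivation_zero: "is_derivation \<delta> \<Longrightarrow> \<delta> 0 = 0"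
  unfolding is_derivation_def by (metis add_cancel_right_right add_0)

lemma dR_zero: "\<forall>x. is_derivation (D x) \<Longrightarrow> dR br D (\<lambda>_. 0) = (\<lambda>_. 0)"
  by (simp add: dR_def derivation_zero)

lemma cotensor_homogeneous_dR:
  assumes "\<forall>x. is_derivation (D x)" and "cotensor_homogeneous q f"
  shows "cotensor_homogeneous (q - 1) (dR br D f)"
  unfolding cotensor_homogeneous_def
proof (intro allI impI)
  fix l assume nonzero: "dR br D f l \<noteq> 0"
  show "int (length l) = - (q - 1)"
  proof (rule ccontr)
    assume wrong_length: "int (length l) \<noteq> - (q - 1)"
    have f_vanishes: "f w = 0" if "length w + 1 = length l" for w
      using that wrong_length assms(2) unfolding cotensor_homogeneous_def by force
    have "(\<Sum>j<length l. (-1) ^ j * D (l ! j) (f (del_nth j l))) = 0"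
      by (intro sum.neutral ballI) (simp add: f_vanishes del_nth_def derivation_zero assms(1))
    moreover have
      "(\<Sum>j<length l. \<Sum>i<j. (-1) ^ (i + j) * f (br (l ! i) (l ! j) # del_nth i (del_nth j l))) = 0"
      by (intro sum.neutral ballI) (simp add: f_vanishes del_nth_def)
    ultimately show False using nonzero by (simp add: dR_def)
  qed
qed

lemma cotensor_homogeneous_unique:
  assumes "cotensor_homogeneous p f" and "cotensor_homogeneous q f" and "f \<noteq> (\<lambda>_. 0)"
  shows "p = q"
proof -
  obtain l where "f l \<noteq> 0" using assms(3) by blast
  with assms(1,2) show ?thesis by (force simp: cotensor_homogeneous_def)
qed

theorem mainTheorem3:
  fixes sm :: "'a::{comm_ring_1,real_algebra_1} \<Rightarrow> 'g::ab_group_add \<Rightarrow> 'g"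
    and br :: "'g \<Rightarrow> 'g \<Rightarrow> 'g" and D :: "'g \<Rightarrow> 'a \<Rightarrow> 'a"
    and \<omega> f x y :: "'g list \<Rightarrow> 'a" and n :: nat and df dx dy :: int
  assumes "n_plectic n sm br D \<omega>"
    and "f \<in> Pois sm br D \<omega>" and "cotensor_homogeneous df f"
    and "poisson_constraint \<omega> f y" and "hamilton_tensor br D \<omega> f x"
    and "tensor_homogeneous sm dx x" and "tensor_homogeneous sm dy y"
    and "dR br D f \<noteq> (\<lambda>_. 0)"
  shows "dx = df + int n \<and> dy = dx + 1 \<and> dR br D (contr y \<omega>) = contr x \<omega>"
proof -
  have der: "\<forall>x. is_derivation (D x)"
    and alt: "alternating_multilinear sm \<omega>"
    and \<omega>_deg: "cotensor_homogeneous (- int (n + 1)) \<omega>"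
    using assms(1) cotensors_alternating_multilinear
    unfolding n_plectic_def is_lie_rinehart_def by auto
  have f_eq: "contr y \<omega> = f" and df_eq: "contr x \<omega> = dR br D f"
    using assms(4,5) unfolding poisson_constraint_def hamilton_tensor_def by auto
  have f_nonzero: "f \<noteq> (\<lambda>_. 0)"
    using assms(8) dR_zero[OF der] by auto
  have "df - 1 = - int (n + 1) + dx"
    using cotensor_homogeneous_unique[OF cotensor_homogeneous_dR[OF der assms(3)]
        cotensor_homogeneous_contr[OF alt \<omega>_deg assms(6), unfolded df_eq] assms(8)] .
  moreover have "df = - int (n + 1) + dy"
    using cotensor_homogeneous_unique[OF assms(3)
        cotensor_homogeneous_contr[OF alt \<omega>_deg assms(7), unfolded f_eq] f_nonzero] .
  ultimately show ?thesis using f_eq df_eq by simp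
qed

end
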